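(* Let $\mathcal{Q}=(Q,\leq^Q)$ and $\mathcal{P}=(P,\leq^P)$ be finite posets, $w=\mathrm{width}(\mathcal{P})$, $(C_1,\dots,C_w)$ a chain partition of $\mathcal{P}$, and $f:Q\to\{1,\dots,w\}$. Let $I$ be the CSP instance with domain $P$, one variable $x_q$ for every $q\in Q$ (ranging over $C_{f(q)}$), and, for every pair of distinct $q,q'\in Q$, a constraint $c_{q,q'}$ with scope $(x_q,x_{q'})$ whose relation consists of all pairs $(p,p')$ with $p\in C_{f(q)}$, $p'\in C_{f(q')}$ such that ($p\leq^P p'$ iff $q\leq^Q q'$) and ($p'\leq^P p$ iff $q'\leq^Q q$). Then $I$ is closed under every min polymorphism that is compatible with $\leq^P$, i.e., under the binary operation $\min_{\preceq}$ for any linear order $\preceq$ on $P$ that agrees with $\leq^P$ on each chain $C_i$.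
   Context: A chain partition $(C_1,\dots,C_w)$ of $\mathcal{P}$ is a partition of $P$ into chains (sets of pairwise comparable elements). A CSP instance consists of variables, a finite domain $D$, and constraints each given by a scope (ordered tuple of variables) and a relation on $D$ of matching arity. A $k$-ary relation $R$ is closed under a function $\varphi:D^2\to D$ if for any two tuples $t_1,t_2\in R$ the tuple $(\varphi(t_1[1],t_2[1]),\dots,\varphi(t_1[k],t_2[k]))$ is in $R$; an instance is closed under $\varphi$ if all its constraint relations are. A min polymorphism is a function $\varphi(d,d')=\min\{d,d'\}$ with respect to some linear order of $D$. *)

theory Defs
  imports Main
begin

definition partial_order_on' :: "'a set \<Rightarrow> ('a \<Rightarrow> 'a \<Rightarrow> bool) \<Rightarrow> bool" where
  "partial_order_on' A le \<longleftrightarrow>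
     (\<forall>x\<in>A. le x x) \<and>
     (\<forall>x\<in>A. \<forall>y\<in>A. le x y \<and> le y x \<longrightarrow> x = y) \<and>
     (\<forall>x\<in>A. \<forall>y\<in>A. \<forall>z\<in>A. le x y \<and> le y z \<longrightarrow> le x z)"

definition linear_order_on' :: "'a set \<Rightarrow> ('a \<Rightarrow> 'a \<Rightarrow> bool) \<Rightarrow> bool" where
  "linear_order_on' A le \<longleftrightarrow> partial_order_on' A le \<and> (\<forall>x\<in>A. \<forall>y\<in>A. le x y \<or> le y x)"

definition is_chain :: "('a \<Rightarrow> 'a \<Rightarrow> bool) \<Rightarrow> 'a set \<Rightarrow> bool" where
  "is_chain le C \<longleftrightarrow> (\<forall>x\<in>C. \<forall>y\<in>C. le x y \<or> le y x)"

definition is_antichain :: "('a \<Rightarrow> 'a \<Rightarrow> bool) \<Rightarrow> 'a set \<Rightarrow> bool" where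
  "is_antichain le S \<longleftrightarrow> (\<forall>x\<in>S. \<forall>y\<in>S. x \<noteq> y \<longrightarrow> \<not> le x y)"

definition width :: "'a set \<Rightarrow> ('a \<Rightarrow> 'a \<Rightarrow> bool) \<Rightarrow> nat" where
  "width P le = Max {card S | S. S \<subseteq> P \<and> is_antichain le S}"

definition chain_partition :: "'a set \<Rightarrow> ('a \<Rightarrow> 'a \<Rightarrow> bool) \<Rightarrow> nat \<Rightarrow> (nat \<Rightarrow> 'a set) \<Rightarrow> bool" where
  "chain_partition P le w C \<longleftrightarrow>
     (\<Union>i\<in>{1..w}. C i) = P \<and>
     (\<forall>i\<in>{1..w}. \<forall>j\<in>{1..w}. i \<noteq> j \<longrightarrow> C i \<inter> C j = {}) \<and>
     (\<forall>i\<in>{1..w}. is_chain le (C i))"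

definition min_wrt :: "('a \<Rightarrow> 'a \<Rightarrow> bool) \<Rightarrow> 'a \<Rightarrow> 'a \<Rightarrow> 'a" where
  "min_wrt lin x y = (if lin x y then x else y)"

definition closed_under :: "'a list set \<Rightarrow> ('a \<Rightarrow> 'a \<Rightarrow> 'a) \<Rightarrow> bool" where
  "closed_under R \<phi> \<longleftrightarrow>
     (\<forall>t1\<in>R. \<forall>t2\<in>R. length t1 = length t2 \<longrightarrow> map2 \<phi> t1 t2 \<in> R)"

definition constr_rel ::
  "('q \<Rightarrow> 'q \<Rightarrow> bool) \<Rightarrow> ('p \<Rightarrow> 'p \<Rightarrow> bool) \<Rightarrow> (nat \<Rightarrow> 'p set) \<Rightarrow> ('q \<Rightarrow> nat) \<Rightarrow> 'q \<Rightarrow> 'q \<Rightarrow> 'p list set" where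
  "constr_rel leQ leP C f q q' =
     {[p, p'] | p p'. p \<in> C (f q) \<and> p' \<in> C (f q') \<and>
        (leP p p' \<longleftrightarrow> leQ q q') \<and> (leP p' p \<longleftrightarrow> leQ q' q)}"

text \<open>The instance \<open>I\<close> is closed under \<open>\<phi>\<close>: all its constraint relations
  (the binary constraints \<open>c_{q,q'}\<close> for distinct \<open>q,q'\<close>, and the unary domain
  restrictions \<open>x_q \<in> C_{f(q)}\<close>) are closed under \<open>\<phi>\<close>.\<close>
definition instance_closed ::
  "'q set \<Rightarrow> ('q \<Rightarrow> 'q \<Rightarrow> bool) \<Rightarrow> ('p \<Rightarrow> 'p \<Rightarrow> bool) \<Rightarrow> (nat \<Rightarrow> 'p set) \<Rightarrow> ('q \<Rightarrow> nat) \<Rightarrow> ('p \<Rightarrow> 'p \<Rightarrow> 'p) \<Rightarrow> bool" where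
  "instance_closed Q leQ leP C f \<phi> \<longleftrightarrow>
     (\<forall>q\<in>Q. closed_under {[p] | p. p \<in> C (f q)} \<phi>) \<and>
     (\<forall>q\<in>Q. \<forall>q'\<in>Q. q \<noteq> q' \<longrightarrow> closed_under (constr_rel leQ leP C f q q') \<phi>)"

end

theory Submission
  imports Defs
begin

text \<open>On a chain on which the linear order agrees with \<open>\<le>\<^sup>P\<close>, \<open>min\<close> is the \<open>\<le>\<^sup>P\<close>-minimum,
  i.e. one of its arguments lying below both. If \<open>p \<le> p'\<close> holds exactly when \<open>r \<le> r'\<close>
  holds (for \<open>p, r\<close> in one chain and \<open>p', r'\<close> in another), then \<open>min(p,r) \<le> min(p',r')\<close>
  holds exactly when both do: if both hold, \<open>min(p,r)\<close> lies below \<open>p'\<close> and \<open>r'\<close>; conversely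
  \<open>min(p,r)\<close> is \<open>p\<close> or \<open>r\<close>, so one of the two comparisons holds, hence both.\<close>

lemma min_wrt_mem: "a \<in> S \<Longrightarrow> b \<in> S \<Longrightarrow> min_wrt lin a b \<in> S"
  unfolding min_wrt_def by simp

lemma min_wrt_le:
  assumes "is_chain le C" and "\<forall>x\<in>C. le x x"
    and "\<forall>p\<in>C. \<forall>p'\<in>C. lin p p' \<longleftrightarrow> le p p'"
    and "a \<in> C" and "b \<in> C"
  shows "le (min_wrt lin a b) a" and "le (min_wrt lin a b) b"
  using assms unfolding is_chain_def min_wrt_def by auto

lemma min_wrt_le_min_wrt_iff:
  assumes trans: "\<forall>x\<in>P. \<forall>y\<in>P. \<forall>z\<in>P. le x y \<and> le y z \<longrightarrow> le x z"
    and "C1 \<subseteq> P" "is_chain le C1" "\<forall>x\<in>C1. le x x" "\<forall>p\<in>C1. \<forall>p'\<in>C1. lin p p' \<longleftrightarrow> le p p'"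
    and "C2 \<subseteq> P" "is_chain le C2" "\<forall>x\<in>C2. le x x" "\<forall>p\<in>C2. \<forall>p'\<in>C2. lin p p' \<longleftrightarrow> le p p'"
    and a: "a \<in> C1" and b: "b \<in> C1" and c: "c \<in> C2" and d: "d \<in> C2"
    and same: "le a c \<longleftrightarrow> le b d"
  shows "le (min_wrt lin a b) (min_wrt lin c d) \<longleftrightarrow> le a c"
proof -
  define m m' where "m = min_wrt lin a b" and "m' = min_wrt lin c d"
  have m: "m \<in> C1" "le m a" "le m b"
    using min_wrt_mem[OF a b] min_wrt_le[OF assms(3-5) a b] m_def by auto
  have m': "m' \<in> C2" "le m' c" "le m' d"
    using min_wrt_mem[OF c d] min_wrt_le[OF assms(7-9) c d] m'_def by auto
  have in_P: "a \<in> P" "b \<in> P" "c \<in> P" "d \<in> P" "m \<in> P" "m' \<in> P"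
    using a b c d m(1) m'(1) assms(2,6) by auto
  have "le m m' \<longleftrightarrow> le m c \<and> le m d"
  proof
    assume "le m m'"
    then show "le m c \<and> le m d"
      using trans in_P m'(2,3) by blast
  next
    assume "le m c \<and> le m d"
    then show "le m m'"
      unfolding m'_def min_wrt_def by simp
  qed
  also have "\<dots> \<longleftrightarrow> le a c"
  proof
    assume "le m c \<and> le m d"
    then show "le a c"
      using same unfolding m_def min_wrt_def by (simp split: if_splits)
  next
    assume "le a c"
    with same have "le b d" by simp
    with \<open>le a c\<close> show "le m c \<and> le m d"
      using trans in_P m(2,3) by blast
  qed
  finally show ?thesis unfolding m_def m'_def .
qed

lemma constr_rel_closed_under_min_wrt:
  assumes po: "partial_order_on' P leP"
    and chains: "\<And>r. r \<in> {q, q'} \<Longrightarrow> C (f r) \<subseteq> P \<and> is_chain leP (C (f r)) \<and>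
                   (\<forall>p\<in>C (f r). \<forall>p'\<in>C (f r). lin p p' \<longleftrightarrow> leP p p')"
  shows "closed_under (constr_rel leQ leP C f q q') (min_wrt lin)"
  unfolding closed_under_def
proof (intro ballI impI)
  fix t1 t2
  assume "t1 \<in> constr_rel leQ leP C f q q'" "t2 \<in> constr_rel leQ leP C f q q'"
  then obtain a c b d where t: "t1 = [a, c]" "t2 = [b, d]"
    and ab: "a \<in> C (f q)" "b \<in> C (f q)" and cd: "c \<in> C (f q')" "d \<in> C (f q')"
    and ac: "leP a c \<longleftrightarrow> leQ q q'" "leP c a \<longleftrightarrow> leQ q' q"
    and bd: "leP b d \<longleftrightarrow> leQ q q'" "leP d b \<longleftrightarrow> leQ q' q"
    unfolding constr_rel_def by blast
  have refl: "\<forall>x\<in>P. leP x x" and trans: "\<forall>x\<in>P. \<forall>y\<in>P. \<forall>z\<in>P. leP x y \<and> leP y z \<longrightarrow> leP x z"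
    using po unfolding partial_order_on'_def by blast+
  have ch: "C (f q) \<subseteq> P" "is_chain leP (C (f q))" "\<forall>x\<in>C (f q). leP x x"
      "\<forall>p\<in>C (f q). \<forall>p'\<in>C (f q). lin p p' \<longleftrightarrow> leP p p'"
    "C (f q') \<subseteq> P" "is_chain leP (C (f q'))" "\<forall>x\<in>C (f q'). leP x x"
      "\<forall>p\<in>C (f q'). \<forall>p'\<in>C (f q'). lin p p' \<longleftrightarrow> leP p p'"
    using chains[of q] chains[of q'] refl by auto
  have "leP (min_wrt lin a b) (min_wrt lin c d) \<longleftrightarrow> leQ q q'"
    using min_wrt_le_min_wrt_iff[OF trans ch ab cd] ac bd by simp
  moreover have "leP (min_wrt lin c d) (min_wrt lin a b) \<longleftrightarrow> leQ q' q"
    using min_wrt_le_min_wrt_iff[OF trans ch(5-8,1-4) cd ab] ac bd by simp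
  ultimately show "map2 (min_wrt lin) t1 t2 \<in> constr_rel leQ leP C f q q'"
    using min_wrt_mem[OF ab, of lin] min_wrt_mem[OF cd, of lin]
    unfolding t constr_rel_def by auto
qed

theorem lemma3p3:
  fixes Q :: "'q set" and leQ :: "'q \<Rightarrow> 'q \<Rightarrow> bool"
    and P :: "'p set" and leP :: "'p \<Rightarrow> 'p \<Rightarrow> bool"
    and C :: "nat \<Rightarrow> 'p set" and f :: "'q \<Rightarrow> nat"
    and lin :: "'p \<Rightarrow> 'p \<Rightarrow> bool"
  assumes "finite Q" and "partial_order_on' Q leQ"
    and "finite P" and "partial_order_on' P leP"
    and "chain_partition P leP (width P leP) C"
    and "\<forall>q\<in>Q. f q \<in> {1..width P leP}"
    and "linear_order_on' P lin"
    and "\<forall>i\<in>{1..width P leP}. \<forall>p\<in>C i. \<forall>p'\<in>C i. lin p p' \<longleftrightarrow> leP p p'"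
  shows "instance_closed Q leQ leP C f (min_wrt lin)"
proof -
  have chains: "C (f r) \<subseteq> P \<and> is_chain leP (C (f r)) \<and>
      (\<forall>p\<in>C (f r). \<forall>p'\<in>C (f r). lin p p' \<longleftrightarrow> leP p p')" if "r \<in> Q" for r
    using assms(5,6,8) that unfolding chain_partition_def by (metis UN_upper)
  have "closed_under {[p] | p. p \<in> C (f q)} (min_wrt lin)" for q
    unfolding closed_under_def min_wrt_def by auto
  moreover have "closed_under (constr_rel leQ leP C f q q') (min_wrt lin)"
    if "q \<in> Q" "q' \<in> Q" for q q'
    using chains that by (intro constr_rel_closed_under_min_wrt[OF assms(4)]) blast
  ultimately show ?thesis unfolding instance_closed_def by blast
qed

end
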